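(* Let $d$ be prime and let $f:\mathbb{Z}_{c_1}\times\mathbb{Z}_{c_2}\to\mathbb{Z}_d$ be a function that cannot be written as $f(s_1,s_2)=[g_1(s_1)+g_2(s_2)]_d$ for any $g_1:\mathbb{Z}_{c_1}\to\mathbb{Z}_d$, $g_2:\mathbb{Z}_{c_2}\to\mathbb{Z}_d$. Then the only non-signalling distribution $p(m_1,m_2|s_1,s_2)$ ($m_1,m_2\in\mathbb{Z}_d$) whose correlator is $p(k|\mathbf{s})=\delta^k_{f(\mathbf{s})}$ for all $\mathbf{s}$ is $$p(m_1,m_2|s_1,s_2)=\begin{cases}d^{-1}&\text{if }[m_1+m_2]_d=f(s_1,s_2),\\0&\text{otherwise.}\end{cases}$$
   Context: $[\cdot]_d$ is reduction mod $d$. Correlator: $p(k|\mathbf{s})=\sum_{(m_1,m_2):[m_1+m_2]_d=k}p(m_1,m_2|\mathbf{s})$. Non-signalling (bipartite): $\sum_{m_2}p(m_1,m_2|s_1,s_2)$ is independent of $s_2$ and $\sum_{m_1}p(m_1,m_2|s_1,s_2)$ is independent of $s_1$. *)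

theory Defs
  imports Complex_Main "HOL-Computational_Algebra.Primes"
begin

text \<open>Z_n is modelled as {0..<n} (natural numbers below n).
  A bipartite behaviour is p m1 m2 s1 s2 = p(m1,m2|s1,s2), with outputs m1,m2 < d
  and inputs s1 < c1, s2 < c2.\<close>

definition is_distribution :: "nat \<Rightarrow> nat \<Rightarrow> nat \<Rightarrow> (nat \<Rightarrow> nat \<Rightarrow> nat \<Rightarrow> nat \<Rightarrow> real) \<Rightarrow> bool" where
  "is_distribution d c1 c2 p \<longleftrightarrow>
     (\<forall>s1<c1. \<forall>s2<c2.
        (\<forall>m1<d. \<forall>m2<d. 0 \<le> p m1 m2 s1 s2) \<and>
        (\<Sum>m1<d. \<Sum>m2<d. p m1 m2 s1 s2) = 1)"

definition non_signalling :: "nat \<Rightarrow> nat \<Rightarrow> nat \<Rightarrow> (nat \<Rightarrow> nat \<Rightarrow> nat \<Rightarrow> nat \<Rightarrow> real) \<Rightarrow> bool" where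
  "non_signalling d c1 c2 p \<longleftrightarrow>
     (\<forall>s1<c1. \<forall>s2<c2. \<forall>s2'<c2. \<forall>m1<d.
        (\<Sum>m2<d. p m1 m2 s1 s2) = (\<Sum>m2<d. p m1 m2 s1 s2')) \<and>
     (\<forall>s1<c1. \<forall>s1'<c1. \<forall>s2<c2. \<forall>m2<d.
        (\<Sum>m1<d. p m1 m2 s1 s2) = (\<Sum>m1<d. p m1 m2 s1' s2))"

definition correlator :: "nat \<Rightarrow> (nat \<Rightarrow> nat \<Rightarrow> nat \<Rightarrow> nat \<Rightarrow> real) \<Rightarrow> nat \<Rightarrow> nat \<Rightarrow> nat \<Rightarrow> real" where
  "correlator d p k s1 s2 =
     (\<Sum>(m1,m2)\<in>{(m1,m2). m1 < d \<and> m2 < d \<and> (m1 + m2) mod d = k}. p m1 m2 s1 s2)"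

end

theory Submission
  imports Defs "HOL-Number_Theory.Cong"
begin

text \<open>A perfectly correlated non-signalling box has zero weight off the support
  [m1 + m2]_d = f(s), so each marginal of Alice equals the single entry it meets
  on the support, and likewise for Bob. Reading this entry once through Alice and
  once through Bob gives p(x | s1) = p(x + f(0,s2) - f(s1,s2) | 0) for Alice's
  marginals. If f is not additive, the shift f(0,s2) - f(s1,s2) depends on s2,
  so Alice's marginal for s1 = 0 has a period that is nonzero mod d; since it is
  also d-periodic and d is prime, it is constant, hence uniform, and so is every
  entry on the support.\<close>

lemma sum_lessThan_eq_single:
  fixes n :: nat
  assumes "k < n" and "\<And>i. i < n \<Longrightarrow> i \<noteq> k \<Longrightarrow> g i = 0"
  shows "(\<Sum>i<n. g i) = g k"
  using sum.mono_neutral_right[of "{..<n}" "{k}" g] assms by auto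

lemma periodic_int_mult:
  fixes g :: "int \<Rightarrow> 'a"
  assumes period: "\<And>x. g (x + r) = g x"
  shows "g (x + k * r) = g x"
proof (induction k rule: int_induct[where k = 0])
  case (step1 i)
  have "g (x + (i + 1) * r) = g (x + i * r + r)" by (simp add: algebra_simps)
  with step1 period show ?case by simp
next
  case (step2 i)
  have "g (x + (i - 1) * r) = g (x + (i - 1) * r + r)" by (rule period[symmetric])
  also have "\<dots> = g (x + i * r)" by (simp add: algebra_simps)
  finally show ?case using step2 by simp
qed simp

lemma periodic_coprime_imp_constant:
  fixes g :: "int \<Rightarrow> 'a"
  assumes "\<And>x. g (x + a) = g x" and "\<And>x. g (x + b) = g x" and "coprime a b"
  shows "g x = g y"
proof -
  obtain u v where uv: "u * a + v * b = 1"
    using bezout_int[of a b] \<open>coprime a b\<close> by auto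
  have one: "g (z + 1) = g z" for z
    using periodic_int_mult[where g = g, OF assms(1), of "z + v * b" u]
      periodic_int_mult[where g = g, OF assms(2), of z v]
    by (simp add: uv[symmetric] algebra_simps)
  show ?thesis
    using periodic_int_mult[where g = g, OF one, of 0 x] periodic_int_mult[where g = g, OF one, of 0 y]
    by simp
qed

definition additively_separable :: "nat \<Rightarrow> nat \<Rightarrow> nat \<Rightarrow> (nat \<Rightarrow> nat \<Rightarrow> nat) \<Rightarrow> bool" where
  "additively_separable d c1 c2 f \<longleftrightarrow>
     (\<exists>g1 g2. (\<forall>s1<c1. g1 s1 < d) \<and> (\<forall>s2<c2. g2 s2 < d) \<and>
        (\<forall>s1<c1. \<forall>s2<c2. f s1 s2 = (g1 s1 + g2 s2) mod d))"

lemma additively_separable_if_mixed_difference_cong: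
  fixes f :: "nat \<Rightarrow> nat \<Rightarrow> nat"
  assumes "0 < d" "0 < c1"
    and f_range: "\<forall>s1<c1. \<forall>s2<c2. f s1 s2 < d"
    and mixed: "\<And>s1 s2. s1 < c1 \<Longrightarrow> s2 < c2 \<Longrightarrow>
      [int (f s1 s2) + int (f 0 0) = int (f s1 0) + int (f 0 s2)] (mod int d)"
  shows "additively_separable d c1 c2 f"
  unfolding additively_separable_def
proof (intro exI conjI allI impI)
  define g1 where "g1 s1 = nat ((int (f s1 0) - int (f 0 0)) mod int d)" for s1
  show "g1 s1 < d" for s1
    using \<open>0 < d\<close> by (simp add: g1_def nat_less_iff)
  show "f 0 s2 < d" if "s2 < c2" for s2
    using f_range \<open>0 < c1\<close> that by blast
  fix s1 s2 assume s: "s1 < c1" "s2 < c2"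
  have "int ((g1 s1 + f 0 s2) mod d) = (int (f s1 0) - int (f 0 0) + int (f 0 s2)) mod int d"
    using \<open>0 < d\<close> by (simp add: g1_def zmod_int mod_add_left_eq)
  also have "\<dots> = int (f s1 s2) mod int d"
    using mixed[OF s] unfolding cong_def mod_eq_dvd_iff
    by (metis dvd_diff_commute add.commute diff_diff_eq2 diff_add_eq)
  also have "\<dots> = int (f s1 s2)"
    using f_range s by simp
  finally show "f s1 s2 = (g1 s1 + f 0 s2) mod d"
    by linarith
qed

locale perfect_correlation_box =
  fixes d c1 c2 :: nat
    and f :: "nat \<Rightarrow> nat \<Rightarrow> nat"
    and p :: "nat \<Rightarrow> nat \<Rightarrow> nat \<Rightarrow> nat \<Rightarrow> real"
  assumes d_pos: "0 < d" and c1_pos: "0 < c1" and c2_pos: "0 < c2"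
    and f_range: "\<forall>s1<c1. \<forall>s2<c2. f s1 s2 < d"
    and distribution: "is_distribution d c1 c2 p"
    and non_signalling: "non_signalling d c1 c2 p"
    and correlator_delta: "\<forall>s1<c1. \<forall>s2<c2. \<forall>k<d.
          correlator d p k s1 s2 = (if k = f s1 s2 then 1 else 0)"
begin

text \<open>Each marginal is taken at input 0 of the other party (non-signalling makes
  this choice irrelevant) and indexed by an integer read mod d, so that the shifts
  below need no truncated subtraction.\<close>

definition marginal1 :: "nat \<Rightarrow> int \<Rightarrow> real" where
  "marginal1 s1 x = (\<Sum>m2<d. p (nat (x mod int d)) m2 s1 0)"

definition marginal2 :: "nat \<Rightarrow> int \<Rightarrow> real" where
  "marginal2 s2 y = (\<Sum>m1<d. p m1 (nat (y mod int d)) 0 s2)"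

lemma marginal1_of_nat: "m1 < d \<Longrightarrow> marginal1 s1 (int m1) = (\<Sum>m2<d. p m1 m2 s1 0)"
  by (simp add: marginal1_def zmod_int[symmetric])

lemma marginal2_of_nat: "m2 < d \<Longrightarrow> marginal2 s2 (int m2) = (\<Sum>m1<d. p m1 m2 0 s2)"
  by (simp add: marginal2_def zmod_int[symmetric])

lemma row_sum_independent:
  "s1 < c1 \<Longrightarrow> s2 < c2 \<Longrightarrow> s2' < c2 \<Longrightarrow> m1 < d \<Longrightarrow>
    (\<Sum>m2<d. p m1 m2 s1 s2) = (\<Sum>m2<d. p m1 m2 s1 s2')"
  using non_signalling unfolding non_signalling_def by blast

lemma column_sum_independent:
  "s1 < c1 \<Longrightarrow> s1' < c1 \<Longrightarrow> s2 < c2 \<Longrightarrow> m2 < d \<Longrightarrow>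
    (\<Sum>m1<d. p m1 m2 s1 s2) = (\<Sum>m1<d. p m1 m2 s1' s2)"
  using non_signalling unfolding non_signalling_def by blast

lemma entry_nonneg: "s1 < c1 \<Longrightarrow> s2 < c2 \<Longrightarrow> m1 < d \<Longrightarrow> m2 < d \<Longrightarrow> 0 \<le> p m1 m2 s1 s2"
  using distribution unfolding is_distribution_def by blast

lemma entry_off_support:
  assumes s: "s1 < c1" "s2 < c2" and m: "m1 < d" "m2 < d"
    and off: "(m1 + m2) mod d \<noteq> f s1 s2"
  shows "p m1 m2 s1 s2 = 0"
proof -
  define k where "k = (m1 + m2) mod d"
  define S where "S = {(a, b). a < d \<and> b < d \<and> (a + b) mod d = k}"
  have fin: "finite S"
    by (rule finite_subset[of _ "{..<d} \<times> {..<d}"]) (auto simp: S_def)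
  have sum_zero: "(\<Sum>(a, b)\<in>S. p a b s1 s2) = 0"
    using correlator_delta s off d_pos by (simp add: correlator_def S_def k_def)
  have nonneg: "\<And>x. x \<in> S \<Longrightarrow> 0 \<le> (case x of (a, b) \<Rightarrow> p a b s1 s2)"
    by (auto simp: S_def intro: entry_nonneg[OF s])
  have "(m1, m2) \<in> S"
    using m by (simp add: S_def k_def)
  from sum_nonneg_0[OF fin nonneg sum_zero this] show ?thesis
    by simp
qed

lemma support_entry_eq_marginal1:
  assumes s: "s1 < c1" "s2 < c2" and m: "m1 < d" "m2 < d"
    and on: "(m1 + m2) mod d = f s1 s2"
  shows "p m1 m2 s1 s2 = marginal1 s1 (int m1)"
proof -
  have "marginal1 s1 (int m1) = (\<Sum>m<d. p m1 m s1 s2)"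
    using marginal1_of_nat[OF m(1)] row_sum_independent[OF s(1) c2_pos s(2) m(1)] by simp
  also have "\<dots> = p m1 m2 s1 s2"
  proof (rule sum_lessThan_eq_single[OF m(2)])
    fix m assume "m < d" "m \<noteq> m2"
    then have "(m1 + m) mod d \<noteq> f s1 s2"
      using on m cong_add_lcancel_nat[of m1 m m2 d] by (auto simp: cong_def)
    then show "p m1 m s1 s2 = 0"
      using entry_off_support s m \<open>m < d\<close> by blast
  qed
  finally show ?thesis ..
qed

lemma support_entry_eq_marginal2:
  assumes s: "s1 < c1" "s2 < c2" and m: "m1 < d" "m2 < d"
    and on: "(m1 + m2) mod d = f s1 s2"
  shows "p m1 m2 s1 s2 = marginal2 s2 (int m2)"
proof -
  have "marginal2 s2 (int m2) = (\<Sum>m<d. p m m2 s1 s2)"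
    using marginal2_of_nat[OF m(2)] column_sum_independent[OF c1_pos s(1) s(2) m(2)] by simp
  also have "\<dots> = p m1 m2 s1 s2"
  proof (rule sum_lessThan_eq_single[OF m(1)])
    fix m assume "m < d" "m \<noteq> m1"
    then have "(m + m2) mod d \<noteq> f s1 s2"
      using on m cong_add_rcancel_nat[of m m2 m1 d] by (auto simp: cong_def)
    then show "p m m2 s1 s2 = 0"
      using entry_off_support s m \<open>m < d\<close> by blast
  qed
  finally show ?thesis ..
qed

lemma marginal1_mod: "marginal1 s1 (x mod int d) = marginal1 s1 x"
  by (simp add: marginal1_def)

lemma marginal2_mod: "marginal2 s2 (y mod int d) = marginal2 s2 y"
  by (simp add: marginal2_def)

lemma marginal1_eq_marginal2:
  assumes s: "s1 < c1" "s2 < c2"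
  shows "marginal1 s1 x = marginal2 s2 (int (f s1 s2) - x)"
proof -
  define m1 where "m1 = nat (x mod int d)"
  define m2 where "m2 = nat ((int (f s1 s2) - x) mod int d)"
  have m: "m1 < d" "m2 < d"
    using d_pos by (simp_all add: m1_def m2_def nat_less_iff)
  have "int ((m1 + m2) mod d) = (x mod int d + (int (f s1 s2) - x) mod int d) mod int d"
    using d_pos by (simp add: m1_def m2_def zmod_int)
  also have "\<dots> = int (f s1 s2)"
    using f_range s by (simp add: mod_add_eq)
  finally have "(m1 + m2) mod d = f s1 s2"
    by linarith
  then have "marginal1 s1 (int m1) = marginal2 s2 (int m2)"
    using support_entry_eq_marginal1[OF s m] support_entry_eq_marginal2[OF s m] by simp
  then show ?thesis
    using d_pos by (simp add: m1_def m2_def marginal1_mod marginal2_mod)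
qed

lemma marginal1_shift:
  assumes "s1 < c1" "s2 < c2"
  shows "marginal1 s1 x = marginal1 0 (x + int (f 0 s2) - int (f s1 s2))"
  using marginal1_eq_marginal2[OF assms] marginal1_eq_marginal2[OF c1_pos assms(2)]
  by simp

lemma marginal1_periodic_mixed_difference:
  assumes "s1 < c1" "s2 < c2"
  shows "marginal1 0 (x + (int (f 0 s2) + int (f s1 0) - int (f s1 s2) - int (f 0 0))) =
    marginal1 0 x"
  using marginal1_shift[OF assms, of "x + int (f s1 0) - int (f 0 0)"]
    marginal1_shift[OF assms(1) c2_pos, of "x + int (f s1 0) - int (f 0 0)"]
  by (simp add: algebra_simps)

lemma marginal1_uniform:
  assumes "prime d" and "\<not> additively_separable d c1 c2 f"
  shows "marginal1 0 x = 1 / real d"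
proof -
  obtain s1 s2 where s: "s1 < c1" "s2 < c2" and
    not_cong: "\<not> [int (f s1 s2) + int (f 0 0) = int (f s1 0) + int (f 0 s2)] (mod int d)"
    using additively_separable_if_mixed_difference_cong[OF d_pos c1_pos f_range] assms(2) by blast
  define r where "r = int (f 0 s2) + int (f s1 0) - int (f s1 s2) - int (f 0 0)"
  have "\<not> int d dvd r"
    using not_cong by (simp add: r_def cong_iff_dvd_diff dvd_diff_commute algebra_simps)
  then have "coprime (int d) r"
    using \<open>prime d\<close> by (simp add: prime_imp_coprime)
  moreover have "marginal1 0 (y + int d) = marginal1 0 y" for y
    by (simp add: marginal1_def)
  ultimately have const: "marginal1 0 y = marginal1 0 x" for y
    using periodic_coprime_imp_constant marginal1_periodic_mixed_difference[OF s]
    unfolding r_def[symmetric] by metis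
  have "1 = (\<Sum>m<d. marginal1 0 (int m))"
    using distribution c1_pos c2_pos by (simp add: is_distribution_def marginal1_of_nat)
  also have "\<dots> = (\<Sum>m<d. marginal1 0 x)"
    by (rule sum.cong[OF refl const])
  also have "\<dots> = real d * marginal1 0 x"
    by simp
  finally show ?thesis
    using d_pos by (simp add: field_simps)
qed

lemma entry_on_support:
  assumes "prime d" and "\<not> additively_separable d c1 c2 f"
    and s: "s1 < c1" "s2 < c2" and m: "m1 < d" "m2 < d"
    and on: "(m1 + m2) mod d = f s1 s2"
  shows "p m1 m2 s1 s2 = 1 / real d"
  using support_entry_eq_marginal1[OF s m on] marginal1_shift[OF s]
    marginal1_uniform[OF assms(1,2)] by simp

end

theorem lemma2p3p1:
  fixes d c1 c2 :: nat
    and f :: "nat \<Rightarrow> nat \<Rightarrow> nat"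
    and p :: "nat \<Rightarrow> nat \<Rightarrow> nat \<Rightarrow> nat \<Rightarrow> real"
  assumes "prime d"
    and "c1 \<ge> 1" and "c2 \<ge> 1"
    and f_range: "\<forall>s1<c1. \<forall>s2<c2. f s1 s2 < d"
    and not_additive: "\<not> (\<exists>g1 g2. (\<forall>s1<c1. g1 s1 < d) \<and> (\<forall>s2<c2. g2 s2 < d) \<and>
                          (\<forall>s1<c1. \<forall>s2<c2. f s1 s2 = (g1 s1 + g2 s2) mod d))"
    and "is_distribution d c1 c2 p"
    and "non_signalling d c1 c2 p"
    and corr: "\<forall>s1<c1. \<forall>s2<c2. \<forall>k<d.
                 correlator d p k s1 s2 = (if k = f s1 s2 then 1 else 0)"
  shows "\<forall>s1<c1. \<forall>s2<c2. \<forall>m1<d. \<forall>m2<d.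
           p m1 m2 s1 s2 = (if (m1 + m2) mod d = f s1 s2 then 1 / real d else 0)"
proof -
  interpret perfect_correlation_box d c1 c2 f p
    using assms by unfold_locales (auto simp: prime_gt_0_nat)
  have "\<not> additively_separable d c1 c2 f"
    using not_additive by (simp add: additively_separable_def)
  then show ?thesis
    using entry_on_support[OF \<open>prime d\<close>] entry_off_support by simp
qed

end
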